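(* For every integer $n\geq 2$, the set $\bigcup_{|\lambda|<1}\ker(W_n^{*}-\lambda I)$ spans a dense subspace of $H^2$.
   Context: $H^2$ denotes the Hardy space of analytic functions $f(z)=\sum_{k\ge0}\hat f(k)z^k$ on the open unit disk with $\sum_{k}|\hat f(k)|^2<\infty$. For $n\in\mathbb{N}$, $W_n$ is the bounded operator on $H^2$ given by $W_nf(z)=(1+z+\cdots+z^{n-1})f(z^n)$, and $W_n^{*}$ is its adjoint; $I$ is the identity and $\lambda$ ranges over complex numbers. *)

theory Defs
  imports "HOL-Analysis.Analysis"
begin

text \<open>The Hardy space H^2 is represented (isometrically) by the Taylor coefficient
  sequences of its elements: f(z) = sum_k a k z^k with sum_k |a k|^2 finite.\<close>

definition H2 :: "(nat \<Rightarrow> complex) set" where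
  "H2 = {a. summable (\<lambda>k. (cmod (a k))\<^sup>2)}"

definition h2_inner :: "(nat \<Rightarrow> complex) \<Rightarrow> (nat \<Rightarrow> complex) \<Rightarrow> complex" where
  "h2_inner a b = (\<Sum>k. a k * cnj (b k))"

definition h2_norm :: "(nat \<Rightarrow> complex) \<Rightarrow> real" where
  "h2_norm a = sqrt (\<Sum>k. (cmod (a k))\<^sup>2)"

text \<open>W_n f(z) = (1 + z + ... + z^(n-1)) f(z^n): on coefficients,
  the coefficient of z^(n k + j), j < n, equals the k-th coefficient of f.\<close>

definition W :: "nat \<Rightarrow> (nat \<Rightarrow> complex) \<Rightarrow> (nat \<Rightarrow> complex)" where
  "W n a = (\<lambda>m. a (m div n))"

definition W_adj :: "nat \<Rightarrow> (nat \<Rightarrow> complex) \<Rightarrow> (nat \<Rightarrow> complex)" where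
  "W_adj n g = (THE h. h \<in> H2 \<and> (\<forall>f\<in>H2. h2_inner (W n f) g = h2_inner f h))"

definition ker_Wadj :: "nat \<Rightarrow> complex \<Rightarrow> (nat \<Rightarrow> complex) set" where
  "ker_Wadj n \<mu> = {g \<in> H2. (\<lambda>k. W_adj n g k - \<mu> * g k) = (\<lambda>k. 0)}"

definition lin_span :: "(nat \<Rightarrow> complex) set \<Rightarrow> (nat \<Rightarrow> complex) set" where
  "lin_span S = {(\<lambda>k. \<Sum>i<(m::nat). c i * v i k) | m c v. \<forall>i<m. v i \<in> S}"

definition dense_in_H2 :: "(nat \<Rightarrow> complex) set \<Rightarrow> bool" where
  "dense_in_H2 S \<longleftrightarrow> (\<forall>f\<in>H2. \<forall>\<epsilon>>0. \<exists>g\<in>S. h2_norm (\<lambda>k. f k - g k) < \<epsilon>)"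

end

theory Submission
  imports Defs
begin

(*
  On coefficient sequences W_n^* is the block sum (B g)_k = sum_{j<n} g_{nk+j}, and B W_n = n I.
  Let V be the closed span of the eigenvectors of B with eigenvalues in the open unit disc; V contains
  ker B. V is invariant under W_n: if B g = mu g with mu ~= 0, then g - (mu/n) W_n g lies in ker B, which
  puts W_n g in the span; if B g = 0, the Neumann series G = sum_i c^i W_n^i g solves G = g + c W_n G, so
  B G = n c G and W_n G = (G - g)/c is in the span, while W_n G tends to W_n g as c tends to 0.
  A sequence x supported in [0, n^(K+1)) now lies in V by induction on K, because x - (1/n) W_n (B x)
  lies in ker B and B x is supported in [0, n^K). In the base case x is a multiple of the first unit
  vector P_0, where P_K = n^(-K) on [0, n^K) and 0 elsewhere: the differences
  P_K - P_(K+1) = n^(-K) W_n^K (P_0 - P_1) lie in V, and the norm n^(-K/2) of P_K tends to 0 as n >= 2.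
  Finally, every element of H^2 is the limit of its finitely supported truncations.
*)

section \<open>Square-summable coefficient sequences\<close>

lemma H2_finite_support:
  assumes "\<And>m. m \<ge> M \<Longrightarrow> x m = 0"
  shows "x \<in> H2"
  unfolding H2_def by (rule CollectI, rule summable_finite[of "{..<M}"]) (use assms in auto)

lemma h2_norm_nonneg: "a \<in> H2 \<Longrightarrow> h2_norm a \<ge> 0"
  unfolding h2_norm_def H2_def by (simp add: suminf_nonneg)

lemma coeff_le_h2_norm:
  assumes "a \<in> H2"
  shows "cmod (a m) \<le> h2_norm a"
proof -
  have "(cmod (a m))\<^sup>2 \<le> (\<Sum>k. (cmod (a k))\<^sup>2)"
    using sum_le_suminf[of "\<lambda>k. (cmod (a k))\<^sup>2" "{m}"] assms by (simp add: H2_def)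
  then show ?thesis
    unfolding h2_norm_def by (metis norm_ge_zero real_le_rsqrt)
qed

lemma L2_set_le_h2_norm:
  assumes "a \<in> H2"
  shows "L2_set (\<lambda>m. cmod (a m)) {..<N} \<le> h2_norm a"
  unfolding L2_set_def h2_norm_def
  using sum_le_suminf[of "\<lambda>k. (cmod (a k))\<^sup>2" "{..<N}"] assms by (simp add: H2_def)

lemma H2_if_L2_set_bounded:
  assumes "\<And>N. L2_set (\<lambda>m. cmod (a m)) {..<N} \<le> T"
  shows "a \<in> H2" and "h2_norm a \<le> T"
proof -
  have T: "T \<ge> 0"
    using assms[of 0] by simp
  have partial: "(\<Sum>m<N. (cmod (a m))\<^sup>2) \<le> T\<^sup>2" for N
    using assms[of N] T unfolding L2_set_def by (metis sqrt_le_D)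
  have summable: "summable (\<lambda>m. (cmod (a m))\<^sup>2)"
    by (rule summableI_nonneg_bounded[OF _ partial]) simp
  then show "a \<in> H2"
    by (simp add: H2_def)
  have "(\<Sum>m. (cmod (a m))\<^sup>2) \<le> T\<^sup>2"
    by (rule suminf_le_const[OF summable partial])
  then show "h2_norm a \<le> T"
    unfolding h2_norm_def using T real_sqrt_le_mono by fastforce
qed

lemma L2_set_sum_triangle_ineq:
  fixes I :: nat
  shows "L2_set (\<lambda>m. cmod (\<Sum>i<I. v i m)) A \<le> (\<Sum>i<I. L2_set (\<lambda>m. cmod (v i m)) A)"
proof (induction I)
  case 0
  then show ?case by (simp add: L2_set_def)
next
  case (Suc I)
  have "L2_set (\<lambda>m. cmod (\<Sum>i<Suc I. v i m)) A
      \<le> L2_set (\<lambda>m. cmod (\<Sum>i<I. v i m) + cmod (v I m)) A"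
    by (rule L2_set_mono) (auto intro: norm_triangle_ineq)
  also have "\<dots> \<le> L2_set (\<lambda>m. cmod (\<Sum>i<I. v i m)) A + L2_set (\<lambda>m. cmod (v I m)) A"
    by (rule L2_set_triangle_ineq)
  also have "\<dots> \<le> (\<Sum>i<Suc I. L2_set (\<lambda>m. cmod (v i m)) A)"
    using Suc by simp
  finally show ?case .
qed

lemma summable_coeff_if_summable_h2_norm:
  assumes "\<And>i. v i \<in> H2" and "summable (\<lambda>i. h2_norm (v i))"
  shows "summable (\<lambda>i. v i m)"
  by (rule summable_comparison_test[OF _ assms(2)]) (auto intro: coeff_le_h2_norm assms(1))

lemma H2_suminf:
  assumes v: "\<And>i. v i \<in> H2" and summable: "summable (\<lambda>i. h2_norm (v i))"
  shows "(\<lambda>m. \<Sum>i. v i m) \<in> H2" and "h2_norm (\<lambda>m. \<Sum>i. v i m) \<le> (\<Sum>i. h2_norm (v i))"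
proof -
  let ?T = "\<Sum>i. h2_norm (v i)"
  have partial: "L2_set (\<lambda>m. cmod (\<Sum>i<I. v i m)) {..<N} \<le> ?T" for I N
  proof -
    have "L2_set (\<lambda>m. cmod (\<Sum>i<I. v i m)) {..<N} \<le> (\<Sum>i<I. L2_set (\<lambda>m. cmod (v i m)) {..<N})"
      by (rule L2_set_sum_triangle_ineq)
    also have "\<dots> \<le> (\<Sum>i<I. h2_norm (v i))"
      by (intro sum_mono L2_set_le_h2_norm v)
    also have "\<dots> \<le> ?T"
      by (rule sum_le_suminf[OF summable]) (auto simp: h2_norm_nonneg v)
    finally show ?thesis .
  qed
  have "(\<lambda>I. L2_set (\<lambda>m. cmod (\<Sum>i<I. v i m)) {..<N}) \<longlonglongrightarrow> L2_set (\<lambda>m. cmod (\<Sum>i. v i m)) {..<N}" for N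
    unfolding L2_set_def
    by (intro tendsto_intros summable_LIMSEQ summable_coeff_if_summable_h2_norm[OF v summable])
  then have "L2_set (\<lambda>m. cmod (\<Sum>i. v i m)) {..<N} \<le> ?T" for N
    by (rule LIMSEQ_le_const2) (use partial in auto)
  then show "(\<lambda>m. \<Sum>i. v i m) \<in> H2" and "h2_norm (\<lambda>m. \<Sum>i. v i m) \<le> ?T"
    by (fact H2_if_L2_set_bounded)+
qed

lemma H2_add:
  assumes "a \<in> H2" "b \<in> H2"
  shows "(\<lambda>k. a k + b k) \<in> H2" and "h2_norm (\<lambda>k. a k + b k) \<le> h2_norm a + h2_norm b"
proof -
  have "L2_set (\<lambda>m. cmod (a m + b m)) {..<N} \<le> h2_norm a + h2_norm b" for N
  proof -
    have "L2_set (\<lambda>m. cmod (a m + b m)) {..<N} \<le> L2_set (\<lambda>m. cmod (a m) + cmod (b m)) {..<N}"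
      by (rule L2_set_mono) (auto intro: norm_triangle_ineq)
    also have "\<dots> \<le> L2_set (\<lambda>m. cmod (a m)) {..<N} + L2_set (\<lambda>m. cmod (b m)) {..<N}"
      by (rule L2_set_triangle_ineq)
    also have "\<dots> \<le> h2_norm a + h2_norm b"
      using assms by (intro add_mono L2_set_le_h2_norm)
    finally show ?thesis .
  qed
  then show "(\<lambda>k. a k + b k) \<in> H2" and "h2_norm (\<lambda>k. a k + b k) \<le> h2_norm a + h2_norm b"
    by (fact H2_if_L2_set_bounded)+
qed

lemma H2_scale:
  assumes "a \<in> H2"
  shows "(\<lambda>k. c * a k) \<in> H2" and "h2_norm (\<lambda>k. c * a k) = cmod c * h2_norm a"
proof -
  have summable: "summable (\<lambda>k. (cmod (a k))\<^sup>2)"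
    using assms by (simp add: H2_def)
  have sq: "(\<lambda>k. (cmod (c * a k))\<^sup>2) = (\<lambda>k. (cmod c)\<^sup>2 * (cmod (a k))\<^sup>2)"
    by (simp add: norm_mult power_mult_distrib)
  show "(\<lambda>k. c * a k) \<in> H2"
    unfolding H2_def using summable by (simp add: sq)
  have "(\<Sum>k. (cmod (c * a k))\<^sup>2) = (cmod c)\<^sup>2 * (\<Sum>k. (cmod (a k))\<^sup>2)"
    unfolding sq by (rule suminf_mult[OF summable])
  then show "h2_norm (\<lambda>k. c * a k) = cmod c * h2_norm a"
    unfolding h2_norm_def by (simp add: real_sqrt_mult)
qed

lemma H2_lin_comb:
  assumes "a \<in> H2" "b \<in> H2"
  shows "(\<lambda>k. x * a k + y * b k) \<in> H2"
  using H2_add(1)[OF H2_scale(1) H2_scale(1)] assms .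

lemma H2_diff:
  assumes "a \<in> H2" "b \<in> H2"
  shows "(\<lambda>k. a k - b k) \<in> H2"
  using H2_lin_comb[OF assms, of 1 "-1"] by simp

lemma h2_norm_diff_triangle:
  assumes "a \<in> H2" "b \<in> H2" "c \<in> H2"
  shows "h2_norm (\<lambda>k. a k - c k) \<le> h2_norm (\<lambda>k. a k - b k) + h2_norm (\<lambda>k. b k - c k)"
  using H2_add(2)[OF H2_diff[OF assms(1,2)] H2_diff[OF assms(2,3)]] by simp

section \<open>The operator W_n and its adjoint\<close>

lemma sum_block_shift:
  fixes k n :: nat
  shows "(\<Sum>m\<in>{k*n..<k*n+n}. f m) = (\<Sum>j<n. f (n*k + j))"
proof -
  have "(\<Sum>m\<in>{0+k*n..<n+k*n}. f m) = (\<Sum>j\<in>{0..<n}. f (j + k*n))"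
    by (rule sum.shift_bounds_nat_ivl)
  then show ?thesis
    by (simp add: atLeast0LessThan algebra_simps)
qed

lemma sums_blocks:
  fixes a :: "nat \<Rightarrow> 'a::{t2_space,topological_comm_monoid_add}"
  assumes "summable a" "n > 0"
  shows "(\<lambda>k. \<Sum>j<n. a (n*k + j)) sums (suminf a)"
  using sums_group[OF summable_sums[OF assms(1)] assms(2)] by (simp add: sum_block_shift)

lemma sums_div_repeat:
  fixes a :: "nat \<Rightarrow> real"
  assumes nonneg: "\<And>k. a k \<ge> 0" and summable: "summable a" and N: "N > 0"
  shows "(\<lambda>m. a (m div N)) sums (N * suminf a)"
proof -
  have block: "(\<Sum>j<N. a ((N*k + j) div N)) = N * a k" for k
    using N by simp
  have "(\<Sum>m<P. a (m div N)) \<le> N * suminf a" for P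
  proof -
    have "(\<Sum>m<P. a (m div N)) \<le> (\<Sum>m<P*N. a (m div N))"
      by (rule sum_mono2) (use N nonneg in auto)
    also have "\<dots> = N * (\<Sum>k<P. a k)"
      by (simp add: sum.nat_group[symmetric] sum_block_shift block sum_distrib_left)
    also have "\<dots> \<le> N * suminf a"
      using sum_le_suminf[OF summable, of "{..<P}"] nonneg by (simp add: mult_left_mono)
    finally show ?thesis .
  qed
  then have summable_div: "summable (\<lambda>m. a (m div N))"
    by (rule summableI_nonneg_bounded[OF nonneg])
  have "(\<lambda>k. N * a k) sums (\<Sum>m. a (m div N))"
    using sums_blocks[OF summable_div N] by (simp add: block)
  then have "(\<Sum>m. a (m div N)) = N * suminf a"
    by (rule sums_unique2) (rule sums_mult[OF summable_sums[OF summable]])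
  then show ?thesis
    using summable_sums[OF summable_div] by simp
qed

lemma W_H2:
  assumes u: "u \<in> H2" and N: "N > 0"
  shows "W N u \<in> H2" and "h2_norm (W N u) = sqrt N * h2_norm u"
proof -
  have sums: "(\<lambda>m. (cmod (W N u m))\<^sup>2) sums (N * (\<Sum>k. (cmod (u k))\<^sup>2))"
    using sums_div_repeat[of "\<lambda>k. (cmod (u k))\<^sup>2" N] u N by (simp add: H2_def W_def)
  then show "W N u \<in> H2"
    by (auto simp: H2_def sums_summable)
  show "h2_norm (W N u) = sqrt N * h2_norm u"
    unfolding h2_norm_def using sums_unique[OF sums, symmetric] by (simp add: real_sqrt_mult)
qed

lemma h2_norm_W_diff:
  assumes "f \<in> H2" "g \<in> H2" "N > 0"
  shows "h2_norm (\<lambda>m. W N f m - W N g m) = sqrt N * h2_norm (\<lambda>k. f k - g k)"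
proof -
  have "(\<lambda>m. W N f m - W N g m) = W N (\<lambda>k. f k - g k)"
    by (simp add: W_def)
  then show ?thesis
    using W_H2(2)[OF H2_diff[OF assms(1,2)] assms(3)] by simp
qed

definition block_sum :: "nat \<Rightarrow> (nat \<Rightarrow> complex) \<Rightarrow> nat \<Rightarrow> complex" where
  "block_sum n g = (\<lambda>k. \<Sum>j<n. g (n*k + j))"

lemma block_sum_lin_comb:
  "block_sum n (\<lambda>k. a * x k + b * y k) = (\<lambda>k. a * block_sum n x k + b * block_sum n y k)"
  by (simp add: block_sum_def sum.distrib sum_distrib_left)

lemma block_sum_W:
  assumes "n > 0"
  shows "block_sum n (W n g) = (\<lambda>k. n * g k)"
  using assms by (simp add: block_sum_def W_def)

lemma block_sum_H2:
  assumes g: "g \<in> H2" and n: "n > 0"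
  shows "block_sum n g \<in> H2"
proof -
  have bound: "(cmod (block_sum n g k))\<^sup>2 \<le> n * (\<Sum>j<n. (cmod (g (n*k + j)))\<^sup>2)" for k
  proof -
    have "(cmod (block_sum n g k))\<^sup>2 \<le> (\<Sum>j<n. cmod (g (n*k + j)))\<^sup>2"
      unfolding block_sum_def by (intro power_mono norm_sum) simp
    also have "\<dots> \<le> n * (\<Sum>j<n. (cmod (g (n*k + j)))\<^sup>2)"
      using sum_squared_le_sum_of_squares[of "\<lambda>j. cmod (g (n*k + j))" "{..<n}"] by (simp add: mult.commute)
    finally show ?thesis .
  qed
  have "summable (\<lambda>k. \<Sum>j<n. (cmod (g (n*k + j)))\<^sup>2)"
    using sums_blocks[of "\<lambda>m. (cmod (g m))\<^sup>2", OF _ n] g by (simp add: H2_def sums_summable)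
  then have "summable (\<lambda>k. n * (\<Sum>j<n. (cmod (g (n*k + j)))\<^sup>2))"
    by (rule summable_mult)
  then show ?thesis
    unfolding H2_def mem_Collect_eq by (rule summable_comparison_test'[where N=0]) (simp add: bound)
qed

lemma summable_h2_inner:
  assumes "a \<in> H2" "b \<in> H2"
  shows "summable (\<lambda>m. a m * cnj (b m))"
proof (rule summable_comparison_test')
  show "summable (\<lambda>m. (cmod (a m))\<^sup>2 + (cmod (b m))\<^sup>2)"
    using assms by (auto simp: H2_def intro: summable_add)
  show "norm (a m * cnj (b m)) \<le> (cmod (a m))\<^sup>2 + (cmod (b m))\<^sup>2" for m
  proof -
    have "2 * cmod (a m) * cmod (b m) \<le> (cmod (a m))\<^sup>2 + (cmod (b m))\<^sup>2"
      by (rule sum_squares_bound)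
    moreover have "0 \<le> cmod (a m) * cmod (b m)"
      by simp
    ultimately have "cmod (a m) * cmod (b m) \<le> (cmod (a m))\<^sup>2 + (cmod (b m))\<^sup>2"
      by linarith
    then show ?thesis
      by (simp add: norm_mult)
  qed
qed

lemma h2_inner_W:
  assumes f: "f \<in> H2" and g: "g \<in> H2" and n: "n > 0"
  shows "h2_inner (W n f) g = h2_inner f (block_sum n g)"
proof -
  have "(\<lambda>k. \<Sum>j<n. W n f (n*k + j) * cnj (g (n*k + j))) sums h2_inner (W n f) g"
    unfolding h2_inner_def by (rule sums_blocks[OF summable_h2_inner[OF W_H2(1)[OF f n] g] n])
  then have "(\<lambda>k. f k * cnj (block_sum n g k)) sums h2_inner (W n f) g"
    using n by (simp add: W_def block_sum_def sum_distrib_left)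
  then show ?thesis
    unfolding h2_inner_def by (simp add: sums_iff)
qed

lemma h2_inner_unit_vector: "h2_inner (\<lambda>m. if m = k then 1 else 0) h = cnj (h k)"
proof -
  have "(\<lambda>m. (if m = k then 1 else 0) * cnj (h m)) = (\<lambda>m. if m = k then cnj (h m) else 0)"
    by auto
  then show ?thesis
    unfolding h2_inner_def using sums_single[of k "\<lambda>m. cnj (h m)"] by (simp add: sums_iff)
qed

lemma W_adj_eq_block_sum:
  assumes g: "g \<in> H2" and n: "n > 0"
  shows "W_adj n g = block_sum n g"
  unfolding W_adj_def
proof (rule the_equality)
  show "block_sum n g \<in> H2 \<and> (\<forall>f\<in>H2. h2_inner (W n f) g = h2_inner f (block_sum n g))"
    using block_sum_H2[OF g n] h2_inner_W[OF _ g n] by auto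
next
  fix h
  assume h: "h \<in> H2 \<and> (\<forall>f\<in>H2. h2_inner (W n f) g = h2_inner f h)"
  show "h = block_sum n g"
  proof
    fix k
    have "(\<lambda>m. if m = k then 1 else 0 :: complex) \<in> H2"
      by (rule H2_finite_support[of "Suc k"]) simp
    then have "h2_inner (\<lambda>m. if m = k then 1 else 0) h
        = h2_inner (\<lambda>m. if m = k then 1 else 0) (block_sum n g)"
      using h h2_inner_W[OF _ g n] by metis
    then show "h k = block_sum n g k"
      by (simp add: h2_inner_unit_vector)
  qed
qed

lemma ker_Wadj_iff:
  assumes "n > 0"
  shows "g \<in> ker_Wadj n \<mu> \<longleftrightarrow> g \<in> H2 \<and> block_sum n g = (\<lambda>k. \<mu> * g k)"
  using W_adj_eq_block_sum[OF _ assms] by (auto simp: ker_Wadj_def fun_eq_iff)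

section \<open>Closed linear spans\<close>

lemma lin_span_lin_comb:
  assumes "x \<in> lin_span S" "y \<in> lin_span S"
  shows "(\<lambda>k. a * x k + b * y k) \<in> lin_span S"
proof -
  obtain m1 :: nat and c1 v1 where x: "x = (\<lambda>k. \<Sum>i<m1. c1 i * v1 i k)" and v1: "\<forall>i<m1. v1 i \<in> S"
    using assms(1) unfolding lin_span_def by blast
  obtain m2 :: nat and c2 v2 where y: "y = (\<lambda>k. \<Sum>i<m2. c2 i * v2 i k)" and v2: "\<forall>i<m2. v2 i \<in> S"
    using assms(2) unfolding lin_span_def by blast
  define c where "c i = (if i < m1 then a * c1 i else b * c2 (i - m1))" for i
  define v where "v i = (if i < m1 then v1 i else v2 (i - m1))" for i
  have "(\<lambda>k. a * x k + b * y k) = (\<lambda>k. \<Sum>i<m1+m2. c i * v i k)"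
  proof
    fix k
    have "(\<Sum>i<m1+m2. c i * v i k) = (\<Sum>i<m1. c i * v i k) + (\<Sum>i<m2. c (m1+i) * v (m1+i) k)"
      by (induction m2) (auto simp: add.assoc)
    then show "a * x k + b * y k = (\<Sum>i<m1+m2. c i * v i k)"
      unfolding x y by (simp add: c_def v_def sum_distrib_left mult.assoc)
  qed
  moreover have "\<forall>i<m1+m2. v i \<in> S"
    using v1 v2 by (auto simp: v_def)
  ultimately show ?thesis
    unfolding lin_span_def by blast
qed

lemma lin_span_base: "x \<in> S \<Longrightarrow> x \<in> lin_span S"
  unfolding lin_span_def
  by (rule CollectI, rule exI[of _ 1], rule exI[of _ "\<lambda>i. 1"], rule exI[of _ "\<lambda>i. x"]) auto

lemma zero_in_lin_span: "(\<lambda>k. 0) \<in> lin_span S"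
  unfolding lin_span_def by (rule CollectI, rule exI[of _ 0]) auto

lemma lin_span_subset_H2:
  assumes "S \<subseteq> H2"
  shows "lin_span S \<subseteq> H2"
proof
  fix x
  assume "x \<in> lin_span S"
  then obtain m :: nat and c v where x: "x = (\<lambda>k. \<Sum>i<m. c i * v i k)" and v: "\<forall>i<m. v i \<in> S"
    unfolding lin_span_def by blast
  have "(\<lambda>k. \<Sum>i<m'. c i * v i k) \<in> H2" if "m' \<le> m" for m'
    using that
  proof (induction m')
    case 0
    then show ?case by (simp add: H2_finite_support)
  next
    case (Suc m')
    have "v m' \<in> H2"
      using Suc.prems v assms by auto
    then show ?case
      using H2_lin_comb[OF Suc.IH, of "v m'" 1 "c m'"] Suc.prems by simp
  qed
  then show "x \<in> H2"
    unfolding x by simp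
qed

definition closed_span :: "(nat \<Rightarrow> complex) set \<Rightarrow> (nat \<Rightarrow> complex) set" where
  "closed_span E = {f \<in> H2. \<forall>\<epsilon>>0. \<exists>g\<in>lin_span E. h2_norm (\<lambda>k. f k - g k) < \<epsilon>}"

lemma dense_in_H2_if_closed_span: "H2 \<subseteq> closed_span E \<Longrightarrow> dense_in_H2 (lin_span E)"
  unfolding dense_in_H2_def closed_span_def by blast

lemma closed_span_subset_H2: "closed_span E \<subseteq> H2"
  unfolding closed_span_def by blast

lemma lin_span_subset_closed_span:
  assumes "E \<subseteq> H2"
  shows "lin_span E \<subseteq> closed_span E"
proof
  fix g
  assume g: "g \<in> lin_span E"
  then have "h2_norm (\<lambda>k. g k - g k) = 0"
    by (simp add: h2_norm_def)
  then show "g \<in> closed_span E"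
    unfolding closed_span_def using g lin_span_subset_H2[OF assms] by (auto intro!: bexI[of _ g])
qed

lemma closed_span_approx:
  assumes E: "E \<subseteq> H2" and f: "f \<in> H2"
    and approx: "\<And>\<epsilon>. \<epsilon> > 0 \<Longrightarrow> \<exists>h\<in>closed_span E. h2_norm (\<lambda>k. f k - h k) < \<epsilon>"
  shows "f \<in> closed_span E"
proof -
  have "\<exists>g\<in>lin_span E. h2_norm (\<lambda>k. f k - g k) < \<epsilon>" if "\<epsilon> > 0" for \<epsilon>
  proof -
    have half: "\<epsilon>/2 > 0"
      using that by simp
    obtain h where h: "h \<in> closed_span E" "h2_norm (\<lambda>k. f k - h k) < \<epsilon>/2"
      using approx[OF half] by blast
    then obtain g where g: "g \<in> lin_span E" "h2_norm (\<lambda>k. h k - g k) < \<epsilon>/2"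
      using half unfolding closed_span_def by blast
    have "h \<in> H2" "g \<in> H2"
      using h(1) g(1) closed_span_subset_H2 lin_span_subset_H2[OF E] by blast+
    then have "h2_norm (\<lambda>k. f k - g k) \<le> h2_norm (\<lambda>k. f k - h k) + h2_norm (\<lambda>k. h k - g k)"
      by (intro h2_norm_diff_triangle f)
    then have "h2_norm (\<lambda>k. f k - g k) < \<epsilon>"
      using h(2) g(2) by linarith
    then show ?thesis
      using g(1) by blast
  qed
  then show ?thesis
    unfolding closed_span_def using f by blast
qed

lemma closed_span_add:
  assumes E: "E \<subseteq> H2" and x: "x \<in> closed_span E" and y: "y \<in> closed_span E"
  shows "(\<lambda>k. x k + y k) \<in> closed_span E"
proof -
  have "\<exists>g\<in>lin_span E. h2_norm (\<lambda>k. x k + y k - g k) < \<epsilon>" if "\<epsilon> > 0" for \<epsilon>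
  proof -
    have half: "\<epsilon>/2 > 0"
      using that by simp
    obtain g1 where g1: "g1 \<in> lin_span E" "h2_norm (\<lambda>k. x k - g1 k) < \<epsilon>/2"
      using x half unfolding closed_span_def by blast
    obtain g2 where g2: "g2 \<in> lin_span E" "h2_norm (\<lambda>k. y k - g2 k) < \<epsilon>/2"
      using y half unfolding closed_span_def by blast
    have "x \<in> H2" "y \<in> H2" "g1 \<in> H2" "g2 \<in> H2"
      using x y g1(1) g2(1) closed_span_subset_H2 lin_span_subset_H2[OF E] by blast+
    then have "h2_norm (\<lambda>k. (x k - g1 k) + (y k - g2 k))
        \<le> h2_norm (\<lambda>k. x k - g1 k) + h2_norm (\<lambda>k. y k - g2 k)"
      by (intro H2_add(2) H2_diff)
    then have "h2_norm (\<lambda>k. x k + y k - (g1 k + g2 k)) < \<epsilon>"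
      using g1(2) g2(2) by (simp add: algebra_simps)
    moreover have "(\<lambda>k. g1 k + g2 k) \<in> lin_span E"
      using lin_span_lin_comb[OF g1(1) g2(1), of 1 1] by simp
    ultimately show ?thesis
      by fastforce
  qed
  moreover have "(\<lambda>k. x k + y k) \<in> H2"
    using x y closed_span_subset_H2 by (auto intro: H2_add)
  ultimately show ?thesis
    unfolding closed_span_def by blast
qed

lemma closed_span_scale:
  assumes E: "E \<subseteq> H2" and x: "x \<in> closed_span E"
  shows "(\<lambda>k. c * x k) \<in> closed_span E"
proof -
  have "\<exists>g\<in>lin_span E. h2_norm (\<lambda>k. c * x k - g k) < \<epsilon>" if "\<epsilon> > 0" for \<epsilon>
  proof -
    have "\<epsilon> / (cmod c + 1) > 0"
      using \<open>\<epsilon> > 0\<close> by (simp add: add_nonneg_pos)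
    then obtain g where g: "g \<in> lin_span E" "h2_norm (\<lambda>k. x k - g k) < \<epsilon> / (cmod c + 1)"
      using x unfolding closed_span_def by blast
    have "h2_norm (\<lambda>k. c * x k - c * g k) = cmod c * h2_norm (\<lambda>k. x k - g k)"
      using H2_scale(2)[OF H2_diff, of x g c] x g closed_span_subset_H2 lin_span_subset_H2[OF E]
      by (auto simp: algebra_simps)
    also have "\<dots> \<le> cmod c * (\<epsilon> / (cmod c + 1))"
      using g(2) by (intro mult_left_mono) auto
    also have "\<dots> = \<epsilon> * (cmod c / (cmod c + 1))"
      by simp
    also have "\<dots> < \<epsilon> * 1"
      using \<open>\<epsilon> > 0\<close> by (intro mult_strict_left_mono) (auto simp: divide_less_eq_1_pos add_nonneg_pos)
    finally show ?thesis
      using lin_span_lin_comb[OF g(1) g(1), of c 0] by force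
  qed
  moreover have "(\<lambda>k. c * x k) \<in> H2"
    using x closed_span_subset_H2 by (auto intro: H2_scale)
  ultimately show ?thesis
    unfolding closed_span_def by blast
qed

lemma closed_span_lin_comb:
  assumes "E \<subseteq> H2" "x \<in> closed_span E" "y \<in> closed_span E"
  shows "(\<lambda>k. a * x k + b * y k) \<in> closed_span E"
  using closed_span_add[OF assms(1) closed_span_scale[OF assms(1,2)] closed_span_scale[OF assms(1,3)]] .

lemma closed_span_sum:
  fixes m :: nat
  assumes "E \<subseteq> H2" "\<And>i. i < m \<Longrightarrow> v i \<in> closed_span E"
  shows "(\<lambda>k. \<Sum>i<m. c i * v i k) \<in> closed_span E"
  using assms(2)
proof (induction m)
  case 0
  then show ?case
    using lin_span_subset_closed_span[OF assms(1)] zero_in_lin_span by auto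
next
  case (Suc m)
  then show ?case
    using closed_span_lin_comb[OF assms(1) Suc.IH, of "v m" 1 "c m"] by simp
qed

lemma closed_span_invariant:
  assumes E: "E \<subseteq> H2" and C: "C > 0"
    and T_H2: "\<And>f. f \<in> H2 \<Longrightarrow> T f \<in> H2"
    and T_sum: "\<And>m c v. T (\<lambda>k. \<Sum>i<(m::nat). c i * v i k) = (\<lambda>k. \<Sum>i<m. c i * T (v i) k)"
    and T_bounded: "\<And>f g. f \<in> H2 \<Longrightarrow> g \<in> H2 \<Longrightarrow>
      h2_norm (\<lambda>k. T f k - T g k) \<le> C * h2_norm (\<lambda>k. f k - g k)"
    and T_E: "\<And>v. v \<in> E \<Longrightarrow> T v \<in> closed_span E"
    and x: "x \<in> closed_span E"
  shows "T x \<in> closed_span E"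
proof (rule closed_span_approx[OF E T_H2])
  show "x \<in> H2"
    using x closed_span_subset_H2 by blast
  fix \<epsilon> :: real
  assume "\<epsilon> > 0"
  then have "\<epsilon> / C > 0"
    using C by simp
  then obtain g where g: "g \<in> lin_span E" "h2_norm (\<lambda>k. x k - g k) < \<epsilon> / C"
    using x unfolding closed_span_def by blast
  obtain m :: nat and c v where "g = (\<lambda>k. \<Sum>i<m. c i * v i k)" and "\<forall>i<m. v i \<in> E"
    using g(1) unfolding lin_span_def by blast
  then have "T g \<in> closed_span E"
    using closed_span_sum[OF E] T_E by (simp add: T_sum)
  moreover have "h2_norm (\<lambda>k. T x k - T g k) < \<epsilon>"
  proof -
    have "h2_norm (\<lambda>k. T x k - T g k) \<le> C * h2_norm (\<lambda>k. x k - g k)"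
      using T_bounded x g(1) closed_span_subset_H2 lin_span_subset_H2[OF E] by blast
    also have "\<dots> < \<epsilon>"
      using g(2) C by (simp add: pos_less_divide_eq mult.commute)
    finally show ?thesis .
  qed
  ultimately show "\<exists>h\<in>closed_span E. h2_norm (\<lambda>k. T x k - h k) < \<epsilon>"
    by blast
qed

section \<open>Invariance of the closed span of eigenvectors under W_n\<close>

definition disc_eigenspaces :: "nat \<Rightarrow> (nat \<Rightarrow> complex) set" where
  "disc_eigenspaces n = (\<Union>\<mu>\<in>{\<mu>::complex. cmod \<mu> < 1}. ker_Wadj n \<mu>)"

lemma disc_eigenspaces_subset_H2: "disc_eigenspaces n \<subseteq> H2"
  unfolding disc_eigenspaces_def ker_Wadj_def by auto

lemma disc_eigenspacesI:
  assumes "n > 0" "g \<in> H2" "block_sum n g = (\<lambda>k. \<mu> * g k)" "cmod \<mu> < 1"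
  shows "g \<in> disc_eigenspaces n"
  using assms ker_Wadj_iff[OF assms(1)] unfolding disc_eigenspaces_def by blast

lemma block_sum_kernel_subset_closed_span:
  assumes "n > 0" "g \<in> H2" "block_sum n g = (\<lambda>k. 0)"
  shows "g \<in> closed_span (disc_eigenspaces n)"
proof -
  have "g \<in> disc_eigenspaces n"
    using disc_eigenspacesI[OF assms(1,2), of 0] assms(3) by simp
  then show ?thesis
    using lin_span_subset_closed_span[OF disc_eigenspaces_subset_H2] lin_span_base by blast
qed

lemma W_eigenvector_in_lin_span:
  assumes n: "n > 0" and g: "g \<in> H2" and eigen: "block_sum n g = (\<lambda>k. \<mu> * g k)"
    and \<mu>: "\<mu> \<noteq> 0" "cmod \<mu> < 1"
  shows "W n g \<in> lin_span (disc_eigenspaces n)"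
proof -
  define u where "u = (\<lambda>k. 1 * g k + (- \<mu> / n) * W n g k)"
  have "u \<in> H2"
    unfolding u_def using g W_H2(1)[OF g n] by (rule H2_lin_comb)
  moreover have "block_sum n u = (\<lambda>k. 0 * u k)"
    using n unfolding u_def block_sum_lin_comb eigen block_sum_W[OF n] by simp
  ultimately have "u \<in> disc_eigenspaces n"
    by (rule disc_eigenspacesI[OF n]) simp
  moreover have "g \<in> disc_eigenspaces n"
    using disc_eigenspacesI[OF n g eigen \<mu>(2)] .
  moreover have "W n g = (\<lambda>k. (n / \<mu>) * g k + (- n / \<mu>) * u k)"
    unfolding u_def using \<mu>(1) n by (auto simp: field_simps)
  ultimately show ?thesis
    by (metis lin_span_base lin_span_lin_comb)
qed

lemma W_Neumann_series:
  assumes g: "g \<in> H2" and n: "n > 0" and q: "cmod c * sqrt n < 1"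
  obtains G where "G \<in> H2" and "\<And>m. G m = g m + c * W n G m"
    and "h2_norm G \<le> h2_norm g / (1 - cmod c * sqrt n)"
proof -
  let ?q = "cmod c * sqrt n"
  define v where "v i = (\<lambda>m. c ^ i * W (n ^ i) g m)" for i
  define G where "G = (\<lambda>m. \<Sum>i. v i m)"
  have v_H2: "v i \<in> H2" and h2_norm_v: "h2_norm (v i) = h2_norm g * ?q ^ i" for i
  proof -
    have pos: "n ^ i > 0"
      using n by simp
    show "v i \<in> H2"
      unfolding v_def by (rule H2_scale(1)[OF W_H2(1)[OF g pos]])
    have "h2_norm (v i) = cmod (c ^ i) * (sqrt (n ^ i) * h2_norm g)"
      unfolding v_def H2_scale(2)[OF W_H2(1)[OF g pos]] W_H2(2)[OF g pos] ..
    also have "\<dots> = h2_norm g * ?q ^ i"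
      by (simp add: norm_power real_sqrt_power power_mult_distrib)
    finally show "h2_norm (v i) = h2_norm g * ?q ^ i" .
  qed
  have summable_q: "summable (\<lambda>i. ?q ^ i)"
    using q by (simp add: summable_geometric)
  have summable_v: "summable (\<lambda>i. h2_norm (v i))"
    unfolding h2_norm_v by (rule summable_mult[OF summable_q])
  have G_H2: "G \<in> H2"
    unfolding G_def by (rule H2_suminf(1)[OF v_H2 summable_v])
  have "h2_norm G \<le> (\<Sum>i. h2_norm (v i))"
    unfolding G_def by (rule H2_suminf(2)[OF v_H2 summable_v])
  also have "\<dots> = h2_norm g / (1 - ?q)"
    unfolding h2_norm_v suminf_mult[OF summable_q] using q by (simp add: suminf_geometric)
  finally have G_norm: "h2_norm G \<le> h2_norm g / (1 - ?q)" .
  have "G m = g m + c * W n G m" for m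
  proof -
    have summable_coeff: "summable (\<lambda>i. v i k)" for k
      by (rule summable_coeff_if_summable_h2_norm[OF v_H2 summable_v])
    have "v (Suc i) m = c * v i (m div n)" for i
      by (simp add: v_def W_def div_mult2_eq)
    then have "(\<Sum>i. v (Suc i) m) = c * G (m div n)"
      unfolding G_def by (simp add: suminf_mult summable_coeff)
    moreover have "G m = v 0 m + (\<Sum>i. v (Suc i) m)"
      unfolding G_def using suminf_split_head[OF summable_coeff] by simp
    moreover have "v 0 m = g m"
      by (simp add: v_def W_def)
    ultimately show ?thesis
      by (simp add: W_def)
  qed
  with G_H2 G_norm show thesis
    using that by blast
qed

lemma W_Neumann_series_in_lin_span:
  assumes n: "n > 0" and g: "g \<in> H2" and kernel: "block_sum n g = (\<lambda>k. 0)"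
    and G: "G \<in> H2" and G_coeff: "\<And>m. G m = g m + c * W n G m"
    and c: "c \<noteq> 0" "cmod (n * c) < 1"
  shows "W n G \<in> lin_span (disc_eigenspaces n)"
proof -
  have "block_sum n G = block_sum n (\<lambda>m. 1 * g m + c * W n G m)"
    by (rule arg_cong[where f = "block_sum n"]) (simp add: fun_eq_iff G_coeff)
  also have "\<dots> = (\<lambda>k. (n * c) * G k)"
    unfolding block_sum_lin_comb kernel block_sum_W[OF n] by (simp add: mult_ac)
  finally have "G \<in> disc_eigenspaces n"
    using disc_eigenspacesI[OF n G] c(2) by simp
  moreover have "g \<in> disc_eigenspaces n"
    using disc_eigenspacesI[OF n g, of 0] kernel by simp
  moreover have "W n G = (\<lambda>k. (1 / c) * G k + (- 1 / c) * g k)"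
    using c(1) by (simp add: G_coeff field_simps)
  ultimately show ?thesis
    by (metis lin_span_base lin_span_lin_comb)
qed

lemma W_block_sum_kernel:
  assumes n: "n > 0" and g: "g \<in> H2" and kernel: "block_sum n g = (\<lambda>k. 0)"
  shows "W n g \<in> closed_span (disc_eigenspaces n)"
proof (rule closed_span_approx[OF disc_eigenspaces_subset_H2 W_H2(1)[OF g n]])
  fix \<epsilon> :: real
  assume "\<epsilon> > 0"
  have norm_g: "h2_norm g \<ge> 0"
    using g by (rule h2_norm_nonneg)
  obtain r :: real where r: "r > 0" "n * r \<le> 1/2" "n * r * (2 * h2_norm g) < \<epsilon>"
  proof -
    have d: "h2_norm g + \<epsilon> > 0"
      using norm_g \<open>\<epsilon> > 0\<close> by simp
    define s where "s = \<epsilon> / (2 * (h2_norm g + \<epsilon>))"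
    have s: "s > 0" "s \<le> 1/2" "s * (2 * (h2_norm g + \<epsilon>)) = \<epsilon>"
      using d norm_g \<open>\<epsilon> > 0\<close> by (simp_all add: s_def)
    have "s * (2 * h2_norm g) = \<epsilon> - 2 * (s * \<epsilon>)"
      using s(3) by (simp add: algebra_simps)
    moreover have "0 < s * \<epsilon>"
      using s(1) \<open>\<epsilon> > 0\<close> by simp
    ultimately have "s * (2 * h2_norm g) < \<epsilon>"
      by linarith
    then show thesis
      using that[of "s / n"] s n by simp
  qed
  define c where "c = complex_of_real r"
  have c: "cmod c = r" "c \<noteq> 0"
    using r by (simp_all add: c_def)
  have "sqrt n \<le> n"
    using n by (intro real_le_lsqrt) (auto simp: power2_eq_square)
  then have q: "cmod c * sqrt n \<le> 1/2"
    using c r by (metis mult.commute mult_left_mono less_imp_le order_trans)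
  then have "cmod c * sqrt n < 1"
    by simp
  then obtain G where G_H2: "G \<in> H2" and G_coeff: "\<And>m. G m = g m + c * W n G m"
    and G_norm: "h2_norm G \<le> h2_norm g / (1 - cmod c * sqrt n)"
    using W_Neumann_series[OF g n] by blast
  have "W n G \<in> closed_span (disc_eigenspaces n)"
    using W_Neumann_series_in_lin_span[OF n g kernel G_H2 G_coeff] c r
      lin_span_subset_closed_span[OF disc_eigenspaces_subset_H2]
    by (auto simp: norm_mult)
  moreover have "h2_norm (\<lambda>k. W n g k - W n G k) < \<epsilon>"
  proof -
    have "h2_norm (\<lambda>k. W n g k - W n G k) = sqrt n * h2_norm (\<lambda>k. (- c) * W n G k)"
      using h2_norm_W_diff[OF g G_H2 n] by (simp add: G_coeff)
    also have "\<dots> = n * r * h2_norm G"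
      unfolding H2_scale(2)[OF W_H2(1)[OF G_H2 n]] W_H2(2)[OF G_H2 n] norm_minus_cancel c(1)
      by (simp add: mult_ac)
    also have "\<dots> \<le> n * r * (2 * h2_norm g)"
    proof -
      have "h2_norm g / (1 - cmod c * sqrt n) \<le> h2_norm g / (1/2)"
        using q norm_g by (intro divide_left_mono) auto
      then show ?thesis
        using G_norm r by (intro mult_left_mono) auto
    qed
    also have "\<dots> < \<epsilon>"
      by (fact r(3))
    finally show ?thesis .
  qed
  ultimately show "\<exists>h\<in>closed_span (disc_eigenspaces n). h2_norm (\<lambda>k. W n g k - h k) < \<epsilon>"
    by blast
qed

lemma W_disc_eigenspaces:
  assumes n: "n > 0" and g: "g \<in> disc_eigenspaces n"
  shows "W n g \<in> closed_span (disc_eigenspaces n)"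
proof -
  obtain \<mu> where "cmod \<mu> < 1" "g \<in> H2" "block_sum n g = (\<lambda>k. \<mu> * g k)"
    using g ker_Wadj_iff[OF n] unfolding disc_eigenspaces_def by blast
  then show ?thesis
  proof (cases "\<mu> = 0")
    case True
    then show ?thesis
      using W_block_sum_kernel[OF n] \<open>g \<in> H2\<close> \<open>block_sum n g = (\<lambda>k. \<mu> * g k)\<close> by simp
  next
    case False
    then have "W n g \<in> lin_span (disc_eigenspaces n)"
      using W_eigenvector_in_lin_span[OF n] \<open>cmod \<mu> < 1\<close> \<open>g \<in> H2\<close> \<open>block_sum n g = (\<lambda>k. \<mu> * g k)\<close>
      by blast
    then show ?thesis
      using lin_span_subset_closed_span[OF disc_eigenspaces_subset_H2] by blast
  qed
qed

lemma W_closed_span: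
  assumes n: "n > 0" and x: "x \<in> closed_span (disc_eigenspaces n)"
  shows "W n x \<in> closed_span (disc_eigenspaces n)"
proof (rule closed_span_invariant[OF disc_eigenspaces_subset_H2, where C = "sqrt n" and T = "W n"])
  show "sqrt n > 0"
    using n by simp
  show "W n f \<in> H2" if "f \<in> H2" for f
    using W_H2(1)[OF that n] .
  show "W n (\<lambda>k. \<Sum>i<m. c i * v i k) = (\<lambda>k. \<Sum>i<m. c i * W n (v i) k)" for m :: nat and c v
    by (simp add: W_def)
  show "h2_norm (\<lambda>k. W n f k - W n g k) \<le> sqrt n * h2_norm (\<lambda>k. f k - g k)"
    if "f \<in> H2" "g \<in> H2" for f g
    using h2_norm_W_diff[OF that n] by simp
qed (use W_disc_eigenspaces[OF n] x in auto)

section \<open>Density\<close>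

definition block_average :: "nat \<Rightarrow> nat \<Rightarrow> nat \<Rightarrow> complex" where
  "block_average n K = (\<lambda>m. if m < n ^ K then 1 / of_nat (n ^ K) else 0)"

lemma block_average_H2: "block_average n K \<in> H2"
  by (rule H2_finite_support[of "n ^ K"]) (simp add: block_average_def)

lemma h2_norm_block_average:
  assumes n: "n > 0"
  shows "h2_norm (block_average n K) = 1 / sqrt (n ^ K)"
proof -
  have "(\<Sum>m. (cmod (block_average n K m))\<^sup>2) = (\<Sum>m<n ^ K. (cmod (block_average n K m))\<^sup>2)"
    by (rule suminf_finite) (auto simp: block_average_def)
  also have "\<dots> = (\<Sum>m<n ^ K. 1 / (real n ^ K)\<^sup>2)"
    by (rule sum.cong) (auto simp: block_average_def norm_divide norm_power power_divide)
  also have "\<dots> = 1 / real n ^ K"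
    using n by (simp add: power2_eq_square)
  finally show ?thesis
    unfolding h2_norm_def by (simp add: real_sqrt_divide)
qed

lemma W_block_average:
  assumes n: "n > 0"
  shows "W n (block_average n K) = (\<lambda>m. n * block_average n (Suc K) m)"
proof
  fix m
  have "m div n < n ^ K \<longleftrightarrow> m < n ^ Suc K"
    using n by (simp add: div_less_iff_less_mult mult.commute)
  then show "W n (block_average n K) m = n * block_average n (Suc K) m"
    unfolding W_def block_average_def using n by (simp add: field_simps)
qed

lemma block_sum_block_average_diff:
  assumes n: "n > 0"
  shows "block_sum n (\<lambda>m. block_average n 0 m - block_average n 1 m) = (\<lambda>k. 0)"
proof
  fix k
  show "block_sum n (\<lambda>m. block_average n 0 m - block_average n 1 m) k = 0"
  proof (cases "k = 0")
    case True
    then show ?thesis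
      using n by (simp add: block_sum_def block_average_def sum_subtractf sum.delta)
  next
    case False
    then have "n * k + j \<ge> n" for j
      by (metis le_add1 le_trans mult_le_mono2 nat_mult_1_right Suc_leI neq0_conv One_nat_def)
    then show ?thesis
      using False by (simp add: block_sum_def block_average_def not_less[symmetric])
  qed
qed

lemma block_average_diff_closed_span:
  assumes n: "n > 0"
  shows "(\<lambda>m. block_average n K m - block_average n (Suc K) m) \<in> closed_span (disc_eigenspaces n)"
proof (induction K)
  case 0
  show ?case
    using block_sum_kernel_subset_closed_span[OF n H2_diff[OF block_average_H2 block_average_H2]]
      block_sum_block_average_diff[OF n] by simp
next
  case (Suc K)
  have "(\<lambda>m. block_average n (Suc K) m - block_average n (Suc (Suc K)) m)
      = (\<lambda>m. (1 / of_nat n :: complex) * W n (\<lambda>m. block_average n K m - block_average n (Suc K) m) m)"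
    using fun_cong[OF W_block_average[OF n, of K]] fun_cong[OF W_block_average[OF n, of "Suc K"]] n
    by (auto simp: W_def field_simps)
  then show ?case
    using closed_span_scale[OF disc_eigenspaces_subset_H2 W_closed_span[OF n Suc.IH]] by metis
qed

lemma unit_vector_closed_span:
  assumes n: "n \<ge> 2"
  shows "(\<lambda>m. if m = 0 then 1 else 0) \<in> closed_span (disc_eigenspaces n)"
proof -
  have n0: "n > 0"
    using n by simp
  have telescope: "(\<lambda>m. block_average n 0 m - block_average n K m) \<in> closed_span (disc_eigenspaces n)" for K
  proof (induction K)
    case 0
    then show ?case
      using lin_span_subset_closed_span[OF disc_eigenspaces_subset_H2] zero_in_lin_span by auto
  next
    case (Suc K)
    have "(\<lambda>m. block_average n 0 m - block_average n (Suc K) m)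
        = (\<lambda>m. (block_average n 0 m - block_average n K m)
              + (block_average n K m - block_average n (Suc K) m))"
      by simp
    also have "\<dots> \<in> closed_span (disc_eigenspaces n)"
      by (rule closed_span_add[OF disc_eigenspaces_subset_H2 Suc.IH block_average_diff_closed_span[OF n0]])
    finally show ?case .
  qed
  have unit: "(\<lambda>m. if m = 0 then 1 else 0) = block_average n 0"
    by (auto simp: block_average_def)
  show ?thesis
    unfolding unit
  proof (rule closed_span_approx[OF disc_eigenspaces_subset_H2 block_average_H2])
    fix \<epsilon> :: real
    assume "\<epsilon> > 0"
    obtain K where K: "1 / \<epsilon>\<^sup>2 < real n ^ K"
      using real_arch_pow[of "real n"] n by fastforce
    then have "1 / \<epsilon> < sqrt (n ^ K)"
      using \<open>\<epsilon> > 0\<close> by (metis real_less_rsqrt power_one_over of_nat_power)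
    then have "h2_norm (block_average n K) < \<epsilon>"
      using \<open>\<epsilon> > 0\<close> n0 by (simp add: h2_norm_block_average field_simps)
    then show "\<exists>h\<in>closed_span (disc_eigenspaces n). h2_norm (\<lambda>k. block_average n 0 k - h k) < \<epsilon>"
      using telescope[of K] by (auto intro!: bexI[of _ "\<lambda>m. block_average n 0 m - block_average n K m"])
  qed
qed

lemma closed_span_support_below_power:
  assumes n: "n \<ge> 2" and support: "\<And>m. m \<ge> n ^ K \<Longrightarrow> x m = 0"
  shows "x \<in> closed_span (disc_eigenspaces n)"
  using support
proof (induction K arbitrary: x)
  case 0
  then have "x = (\<lambda>m. x 0 * (if m = 0 then 1 else 0))"
    by (auto simp: Suc_le_eq)
  then show ?case
    using closed_span_scale[OF disc_eigenspaces_subset_H2 unit_vector_closed_span[OF n]] by metis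
next
  case (Suc K)
  have n0: "n > 0"
    using n by simp
  have "block_sum n x k = 0" if "k \<ge> n ^ K" for k
  proof -
    have "n * k + j \<ge> n ^ Suc K" for j
      by (metis that power_Suc mult_le_mono2 trans_le_add1)
    then show ?thesis
      using Suc.prems by (simp add: block_sum_def)
  qed
  then have y: "block_sum n x \<in> closed_span (disc_eigenspaces n)"
    by (rule Suc.IH)
  define u where "u = (\<lambda>m. 1 * x m + (- 1 / n) * W n (block_sum n x) m)"
  have "x \<in> H2"
    by (rule H2_finite_support) (rule Suc.prems)
  then have "u \<in> H2"
    unfolding u_def using W_H2(1)[OF _ n0] y closed_span_subset_H2 by (blast intro: H2_lin_comb)
  moreover have "block_sum n u = (\<lambda>k. 0)"
    using n0 unfolding u_def block_sum_lin_comb block_sum_W[OF n0] by simp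
  ultimately have "u \<in> closed_span (disc_eigenspaces n)"
    by (rule block_sum_kernel_subset_closed_span[OF n0])
  moreover have "x = (\<lambda>m. 1 * u m + (1 / n) * W n (block_sum n x) m)"
    unfolding u_def by simp
  ultimately show ?case
    by (metis closed_span_lin_comb[OF disc_eigenspaces_subset_H2] W_closed_span[OF n0 y])
qed

lemma closed_span_finite_support:
  assumes n: "n \<ge> 2" and support: "\<And>m. m \<ge> M \<Longrightarrow> x m = 0"
  shows "x \<in> closed_span (disc_eigenspaces n)"
proof (rule closed_span_support_below_power[OF n])
  have "M < 2 ^ M"
    by (rule less_exp)
  also have "\<dots> \<le> n ^ M"
    using n by (simp add: power_mono)
  finally show "x m = 0" if "m \<ge> n ^ M" for m
    using support that by simp
qed

lemma H2_truncation_approx: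
  assumes f: "f \<in> H2" and "\<epsilon> > 0"
  obtains M where "h2_norm (\<lambda>k. f k - (if k < M then f k else 0)) < \<epsilon>"
proof -
  have summable: "summable (\<lambda>m. (cmod (f m))\<^sup>2)"
    using f by (simp add: H2_def)
  obtain M where M: "norm (\<Sum>i. (cmod (f (i + M)))\<^sup>2) < \<epsilon>\<^sup>2"
    using suminf_exist_split[OF _ summable, of "\<epsilon>\<^sup>2"] \<open>\<epsilon> > 0\<close> by auto
  let ?d = "\<lambda>m. (cmod (f m - (if m < M then f m else 0)))\<^sup>2"
  have "summable ?d"
    by (rule summable_comparison_test[OF _ summable]) auto
  then have "(\<Sum>m. ?d m) = (\<Sum>i. ?d (i + M)) + (\<Sum>i<M. ?d i)"
    by (rule suminf_split_initial_segment)
  also have "\<dots> = (\<Sum>i. (cmod (f (i + M)))\<^sup>2)"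
    by simp
  finally have "(\<Sum>m. ?d m) < \<epsilon>\<^sup>2"
    using M by simp
  then have "h2_norm (\<lambda>k. f k - (if k < M then f k else 0)) < \<epsilon>"
    unfolding h2_norm_def using \<open>\<epsilon> > 0\<close> real_sqrt_less_mono by fastforce
  then show thesis
    by (rule that)
qed

lemma H2_subset_closed_span:
  assumes n: "n \<ge> 2"
  shows "H2 \<subseteq> closed_span (disc_eigenspaces n)"
proof
  fix f
  assume f: "f \<in> H2"
  show "f \<in> closed_span (disc_eigenspaces n)"
  proof (rule closed_span_approx[OF disc_eigenspaces_subset_H2 f])
    fix \<epsilon> :: real
    assume "\<epsilon> > 0"
    then obtain M where "h2_norm (\<lambda>k. f k - (if k < M then f k else 0)) < \<epsilon>"
      using H2_truncation_approx[OF f] by blast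
    moreover have "(\<lambda>k. if k < M then f k else 0) \<in> closed_span (disc_eigenspaces n)"
      by (rule closed_span_finite_support[OF n, of M]) simp
    ultimately show "\<exists>h\<in>closed_span (disc_eigenspaces n). h2_norm (\<lambda>k. f k - h k) < \<epsilon>"
      by (auto intro!: bexI[of _ "\<lambda>k. if k < M then f k else 0"])
  qed
qed

theorem mainTheorem5:
  fixes n :: nat
  assumes "n \<ge> 2"
  shows "dense_in_H2 (lin_span (\<Union>\<mu>\<in>{\<mu>::complex. cmod \<mu> < 1}. ker_Wadj n \<mu>))"
  using dense_in_H2_if_closed_span[OF H2_subset_closed_span[OF assms]]
  unfolding disc_eigenspaces_def .

end
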